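(* For a threshold graph $G$ and an integer $d\ge0$, $\mathrm{degen}(G)=d$ if and only if $\mathrm{seq}(G)$ contains exactly $d$ ones.
   Context: A threshold graph on $n\ge1$ vertices is built from a base vertex $v_0$ by successively adding $v_1,\dots,v_{n-1}$, each either isolated (adjacent to no earlier vertex) or dominating (adjacent to all earlier vertices); its creation sequence $\mathrm{seq}(G)=s_1\cdots s_{n-1}$ has $s_i=1$ if $v_i$ is dominating and $s_i=0$ otherwise. The degeneracy $\mathrm{degen}(G)$ is the maximum over nonempty induced subgraphs $H$ of $G$ of the minimum degree of $H$. *)

theory Defs
  imports Main
begin

definition simple_graph :: "'a set \<Rightarrow> ('a \<Rightarrow> 'a \<Rightarrow> bool) \<Rightarrow> bool" where
  "simple_graph V E \<longleftrightarrow> finite V \<and> (\<forall>u v. E u v \<longrightarrow> u \<in> V \<and> v \<in> V)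
     \<and> (\<forall>u v. E u v \<longrightarrow> E v u) \<and> (\<forall>v. \<not> E v v)"

definition deg_in :: "('a \<Rightarrow> 'a \<Rightarrow> bool) \<Rightarrow> 'a set \<Rightarrow> 'a \<Rightarrow> nat" where
  "deg_in E S v = card {u \<in> S. E v u}"

definition degen :: "'a set \<Rightarrow> ('a \<Rightarrow> 'a \<Rightarrow> bool) \<Rightarrow> nat" where
  "degen V E = Max {Min (deg_in E S ` S) | S. S \<subseteq> V \<and> S \<noteq> {}}"

text \<open>vs = [v_0, ..., v_{n-1}] is a construction order of the graph (V,E) as a threshold
  graph with creation sequence s = s_1 ... s_{n-1} (stored as s!0 ... s!(n-2)), entries in {0,1}:
  v_j (j \<ge> 1) is adjacent to every earlier vertex if s_j = 1 and to none if s_j = 0.\<close>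
definition threshold_construction ::
  "'a set \<Rightarrow> ('a \<Rightarrow> 'a \<Rightarrow> bool) \<Rightarrow> 'a list \<Rightarrow> nat list \<Rightarrow> bool" where
  "threshold_construction V E vs s \<longleftrightarrow>
     simple_graph V E \<and> distinct vs \<and> set vs = V \<and> length vs \<ge> 1
     \<and> length s = length vs - 1 \<and> set s \<subseteq> {0, 1}
     \<and> (\<forall>i j. i < j \<and> j < length vs \<longrightarrow> (E (vs ! i) (vs ! j) \<longleftrightarrow> s ! (j - 1) = 1))"

end

theory Submission
  imports Defs
begin

text \<open>The earliest vertex of any induced subgraph is adjacent only to later vertices, and a later
  vertex is adjacent to it only if it was added as dominating; so every induced subgraph has a
  vertex of degree at most the number \<open>k\<close> of ones in the creation sequence. Conversely the base
  vertex together with the \<open>k\<close> dominating vertices forms a clique \<open>K\<^sub>k\<^sub>+\<^sub>1\<close>, whose minimum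
  degree is \<open>k\<close>.\<close>

lemma degen_eqI:
  assumes "finite V"
    and le: "\<And>S. S \<subseteq> V \<Longrightarrow> S \<noteq> {} \<Longrightarrow> \<exists>v\<in>S. deg_in E S v \<le> k"
    and "C \<subseteq> V" "C \<noteq> {}" and deg_C: "\<And>v. v \<in> C \<Longrightarrow> deg_in E C v = k"
  shows "degen V E = k"
proof -
  let ?M = "{Min (deg_in E S ` S) | S. S \<subseteq> V \<and> S \<noteq> {}}"
  have upper: "m \<le> k" if "m \<in> ?M" for m
  proof -
    obtain S where S: "S \<subseteq> V" "S \<noteq> {}" "m = Min (deg_in E S ` S)"
      using \<open>m \<in> ?M\<close> by blast
    then obtain v where "v \<in> S" "deg_in E S v \<le> k" using le by blast
    moreover have "finite S" using S(1) \<open>finite V\<close> finite_subset by blast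
    ultimately show ?thesis using S(3) by (meson Min_le finite_imageI image_eqI order_trans)
  qed
  have "deg_in E C ` C = {k}" using deg_C \<open>C \<noteq> {}\<close> by auto
  then have "k = Min (deg_in E C ` C)" by simp
  then have "k \<in> ?M" using \<open>C \<subseteq> V\<close> \<open>C \<noteq> {}\<close> by blast
  moreover have "finite ?M" using upper by (meson atMost_iff finite_atMost finite_subset subsetI)
  ultimately show ?thesis unfolding degen_def using upper by (intro Max_eqI)
qed

lemma deg_in_clique:
  assumes "finite C" "v \<in> C" "\<And>u w. u \<in> C \<Longrightarrow> w \<in> C \<Longrightarrow> E u w \<longleftrightarrow> u \<noteq> w"
  shows "deg_in E C v = card C - 1"
proof -
  have "{u \<in> C. E v u} = C - {v}" using assms(2,3) by auto
  then show ?thesis unfolding deg_in_def using assms(1,2) by simp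
qed

definition dominating_positions :: "nat list \<Rightarrow> nat set" where
  "dominating_positions s = {j. 0 < j \<and> j \<le> length s \<and> s ! (j - 1) = 1}"

lemma card_dominating_positions: "card (dominating_positions s) = count_list s 1"
proof -
  have "dominating_positions s = Suc ` {i. i < length s \<and> s ! i = 1}"
  proof (rule set_eqI)
    fix j show "j \<in> dominating_positions s \<longleftrightarrow> j \<in> Suc ` {i. i < length s \<and> s ! i = 1}"
      unfolding dominating_positions_def by (cases j) auto
  qed
  then have "card (dominating_positions s) = card {i. i < length s \<and> s ! i = 1}"
    by (simp add: card_image)
  also have "\<dots> = count_list s 1"
    unfolding count_list_eq_length_filter length_filter_conv_card by (simp add: eq_commute)
  finally show ?thesis .
qed

lemma threshold_adjacent_iff:
  assumes "threshold_construction V E vs s" "i < j" "j < length vs"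
  shows "E (vs ! i) (vs ! j) \<longleftrightarrow> j \<in> dominating_positions s"
  using assms unfolding threshold_construction_def dominating_positions_def by auto

lemma threshold_min_degree_le:
  assumes thr: "threshold_construction V E vs s" and "S \<subseteq> V" "S \<noteq> {}"
  shows "\<exists>v\<in>S. deg_in E S v \<le> count_list s 1"
proof -
  have irrefl: "\<And>v. \<not> E v v" and "S \<subseteq> set vs"
    using thr \<open>S \<subseteq> V\<close> unfolding threshold_construction_def simple_graph_def by auto
  then have index: "\<exists>j<length vs. vs ! j = w" if "w \<in> S" for w
    using that by (metis in_set_conv_nth subsetD)
  let ?I = "{i. i < length vs \<and> vs ! i \<in> S}"
  define i0 where "i0 = Min ?I"
  have "?I \<noteq> {}" using index \<open>S \<noteq> {}\<close> by blast
  have "finite ?I" by simp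
  have i0: "i0 \<in> ?I" unfolding i0_def using \<open>finite ?I\<close> \<open>?I \<noteq> {}\<close> by (rule Min_in)
  have i0_min: "\<And>j. j \<in> ?I \<Longrightarrow> i0 \<le> j" unfolding i0_def using \<open>finite ?I\<close> by (rule Min_le)
  have "{w \<in> S. E (vs ! i0) w} \<subseteq> (!) vs ` dominating_positions s"
  proof
    fix w assume w: "w \<in> {w \<in> S. E (vs ! i0) w}"
    then obtain j where j: "j < length vs" "vs ! j = w" using index by blast
    have "i0 < j" using i0_min[of j] j w irrefl by (cases "i0 = j") auto
    then show "w \<in> (!) vs ` dominating_positions s"
      using threshold_adjacent_iff[OF thr \<open>i0 < j\<close> j(1)] j w by auto
  qed
  then have "deg_in E S (vs ! i0) \<le> card ((!) vs ` dominating_positions s)"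
    unfolding deg_in_def by (intro card_mono) (auto simp: dominating_positions_def)
  also have "\<dots> \<le> count_list s 1"
    unfolding card_dominating_positions[symmetric]
    by (rule card_image_le) (simp add: dominating_positions_def)
  finally show ?thesis using i0 by blast
qed

lemma threshold_dominating_clique:
  assumes thr: "threshold_construction V E vs s"
  defines "C \<equiv> (!) vs ` insert 0 (dominating_positions s)"
  shows "C \<subseteq> V" "C \<noteq> {}" "finite C" "card C = count_list s 1 + 1"
    and "\<And>u w. u \<in> C \<Longrightarrow> w \<in> C \<Longrightarrow> E u w \<longleftrightarrow> u \<noteq> w"
proof -
  let ?T = "insert 0 (dominating_positions s)"
  have G: "distinct vs" "set vs = V" "length s = length vs - 1" "length vs \<ge> 1"
    "\<And>u v. E u v \<Longrightarrow> E v u" "\<And>v. \<not> E v v"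
    using thr unfolding threshold_construction_def simple_graph_def by auto
  have T: "j < length vs" if "j \<in> ?T" for j
    using that G(3,4) unfolding dominating_positions_def by auto
  have inj: "inj_on ((!) vs) ?T" using G(1) T by (auto simp: inj_on_def nth_eq_iff_index_eq)
  show "C \<subseteq> V" "C \<noteq> {}" using T G(2) unfolding C_def by (auto intro: nth_mem)
  show "finite C" unfolding C_def dominating_positions_def by simp
  have "finite (dominating_positions s)" "0 \<notin> dominating_positions s"
    unfolding dominating_positions_def by simp_all
  then show "card C = count_list s 1 + 1"
    unfolding C_def card_image[OF inj] by (simp add: card_dominating_positions)
  fix u w assume "u \<in> C" "w \<in> C"
  then obtain a b where ab: "a \<in> ?T" "b \<in> ?T" "u = vs ! a" "w = vs ! b" unfolding C_def by blast
  have "E (vs ! a) (vs ! b)" if "a < b" "a \<in> ?T" "b \<in> ?T" for a b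
    using threshold_adjacent_iff[OF thr \<open>a < b\<close> T[OF \<open>b \<in> ?T\<close>]] that by auto
  moreover have "a \<noteq> b \<longleftrightarrow> u \<noteq> w" using ab inj_on_eq_iff[OF inj ab(1,2)] by simp
  ultimately show "E u w \<longleftrightarrow> u \<noteq> w"
    using ab G(5,6) by (metis linorder_neqE_nat)
qed

theorem mainTheorem12:
  fixes V :: "'a set" and E :: "'a \<Rightarrow> 'a \<Rightarrow> bool" and vs :: "'a list"
    and s :: "nat list" and d :: nat
  assumes "threshold_construction V E vs s"
  shows "degen V E = d \<longleftrightarrow> count_list s 1 = d"
proof -
  let ?C = "(!) vs ` insert 0 (dominating_positions s)"
  note clique = threshold_dominating_clique[OF assms]
  have "finite V" using assms unfolding threshold_construction_def simple_graph_def by blast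
  moreover have "deg_in E ?C v = count_list s 1" if "v \<in> ?C" for v
    using deg_in_clique[OF clique(3) that clique(5)] clique(4) by simp
  ultimately have "degen V E = count_list s 1"
    using degen_eqI threshold_min_degree_le[OF assms] clique(1,2) by blast
  then show ?thesis by simp
qed

end
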